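(* Let $d>0$, let $I\subseteq\mathbb{R}$ be a nonempty, non-singleton interval with $\ell(I)\geq d$, and let $f: I\to\mathbb{R}$ be $d$-periodically increasing. Then there exists an increasing function $\widehat{f}: I\to\mathbb{R}$ such that $\sup_{x\in I}|f(x)-\widehat{f}(x)|\leq\frac{\mathscr{H}_d(f)}{2}$.
   Context: $\ell(I)$ denotes the length of $I$. A function $f: I\to\mathbb{R}$ is $d$-periodically increasing if $f(x)\leq f(y)$ for all $x,y\in I$ with $y-x\geq d$. For $x\in I$ let $\mathscr{H}_{x_d}(f)=\sup_{u,v\in[x,x+d]\cap I}|f(u)-f(v)|$, and $\mathscr{H}_d(f)=\sup_{x\in I}\mathscr{H}_{x_d}(f)$. *)

theory Defs
  imports "HOL-Analysis.Analysis"
begin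

definition interval_length :: "real set \<Rightarrow> ereal" where
  "interval_length I = (SUP x\<in>I. ereal x) - (INF x\<in>I. ereal x)"

definition periodically_increasing :: "real \<Rightarrow> real set \<Rightarrow> (real \<Rightarrow> real) \<Rightarrow> bool" where
  "periodically_increasing d I f \<longleftrightarrow> (\<forall>x\<in>I. \<forall>y\<in>I. y - x \<ge> d \<longrightarrow> f x \<le> f y)"

definition local_osc :: "real \<Rightarrow> real set \<Rightarrow> (real \<Rightarrow> real) \<Rightarrow> real \<Rightarrow> ereal" where
  "local_osc d I f x = (SUP p\<in>({x..x+d} \<inter> I) \<times> ({x..x+d} \<inter> I). ereal \<bar>f (fst p) - f (snd p)\<bar>)"

definition osc :: "real \<Rightarrow> real set \<Rightarrow> (real \<Rightarrow> real) \<Rightarrow> ereal" where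
  "osc d I f = (SUP x\<in>I. local_osc d I f x)"

end

theory Submission
  imports Defs
begin

text \<open>For y \<le> z in I the drop f y - f z is at most the oscillation: either z - y \<ge> d and f does
  not drop at all, or y and z lie in one window [y, y + d]. Hence the running supremum of f,
  lowered by half the oscillation, is an increasing function within half the oscillation of f.\<close>

lemma abs_diff_le_osc:
  assumes "x \<in> I" and "u \<in> {x..x+d} \<inter> I" and "v \<in> {x..x+d} \<inter> I"
  shows "ereal \<bar>f u - f v\<bar> \<le> osc d I f"
proof -
  have "ereal \<bar>f u - f v\<bar> \<le> local_osc d I f x"
    unfolding local_osc_def by (rule SUP_upper2[where i="(u, v)"]) (use assms in auto)
  also have "\<dots> \<le> osc d I f"
    unfolding osc_def by (rule SUP_upper) (use assms in auto)
  finally show ?thesis .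
qed

lemma periodically_increasing_drop_le_osc:
  assumes "d \<ge> 0" and "periodically_increasing d I f"
    and "y \<in> I" and "z \<in> I" and "y \<le> z"
  shows "ereal (f y - f z) \<le> osc d I f"
proof (cases "z - y \<ge> d")
  case True
  then have "f y - f z \<le> \<bar>f y - f y\<bar>"
    using assms unfolding periodically_increasing_def by auto
  also have "ereal \<bar>f y - f y\<bar> \<le> osc d I f"
    using assms by (intro abs_diff_le_osc) auto
  finally show ?thesis by simp
next
  case False
  have "f y - f z \<le> \<bar>f y - f z\<bar>" by simp
  also have "ereal \<bar>f y - f z\<bar> \<le> osc d I f"
    using assms False by (intro abs_diff_le_osc) auto
  finally show ?thesis by simp
qed

lemma bounded_drop_imp_mono_approx:
  fixes f :: "'a::linorder \<Rightarrow> real"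
  assumes drop: "\<And>y z. y \<in> I \<Longrightarrow> z \<in> I \<Longrightarrow> y \<le> z \<Longrightarrow> f y - f z \<le> H"
  shows "\<exists>g. mono_on I g \<and> (\<forall>x\<in>I. \<bar>f x - g x\<bar> \<le> H / 2)"
proof -
  define U where "U x = Sup (f ` {y\<in>I. y \<le> x})" for x
  have bdd: "bdd_above (f ` {y\<in>I. y \<le> x})" if "x \<in> I" for x
    using drop that by (intro bdd_aboveI[of _ "f x + H"]) force
  have "mono_on I U"
  proof (rule mono_onI)
    fix r s assume "r \<in> I" "s \<in> I" "r \<le> s"
    then show "U r \<le> U s"
      unfolding U_def using bdd[of s] by (intro cSup_subset_mono) auto
  qed
  then have "mono_on I (\<lambda>x. U x - H / 2)"
    by (auto simp: mono_on_def)
  moreover have "\<bar>f x - (U x - H / 2)\<bar> \<le> H / 2" if "x \<in> I" for x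
  proof -
    have "f x \<le> U x"
      unfolding U_def using that bdd[OF that] by (intro cSup_upper) auto
    moreover have "U x \<le> f x + H"
      unfolding U_def using that drop by (intro cSup_least) force+
    ultimately show ?thesis by linarith
  qed
  ultimately show ?thesis by blast
qed

theorem theorem3p3:
  fixes d :: real and I :: "real set" and f :: "real \<Rightarrow> real"
  assumes "d > 0"
    and "is_interval I"
    and "\<exists>a\<in>I. \<exists>b\<in>I. a \<noteq> b"
    and "interval_length I \<ge> ereal d"
    and "periodically_increasing d I f"
  shows "\<exists>g :: real \<Rightarrow> real. mono_on I g \<and>
           (SUP x\<in>I. ereal \<bar>f x - g x\<bar>) \<le> osc d I f / 2"
proof (cases "osc d I f = \<infinity>")
  case True
  then show ?thesis by (intro exI[of _ "\<lambda>_. 0"]) (simp add: mono_on_def)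
next
  case False
  note drop = periodically_increasing_drop_le_osc[OF less_imp_le[OF assms(1)] assms(5)]
  obtain a where "a \<in> I" using assms(3) by auto
  then have "osc d I f \<noteq> - \<infinity>" using drop[of a a] by auto
  with False obtain H where H: "osc d I f = ereal H" by (cases "osc d I f") auto
  have "f y - f z \<le> H" if "y \<in> I" "z \<in> I" "y \<le> z" for y z
    using drop[OF that] H by simp
  then obtain g where "mono_on I g" and approx: "\<forall>x\<in>I. \<bar>f x - g x\<bar> \<le> H / 2"
    using bounded_drop_imp_mono_approx by blast
  have "(SUP x\<in>I. ereal \<bar>f x - g x\<bar>) \<le> ereal (H / 2)"
    using approx by (intro SUP_least) simp
  also have "ereal (H / 2) = osc d I f / 2" using H by simp
  finally show ?thesis using \<open>mono_on I g\<close> by blast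
qed

end
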